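(* Assume a meet constraint structure $(\Psi_d)_d$ with a compatibility relation $\epsilon$ that distributes over $\wedge$ and is equipped with a witness builder $\beta$, and a constraint-producing predicate $(\models^d)_d$ related to a ground validity predicate $\models$. If $\vdash^{d}\Gamma\to\sigma$ is derivable in DI and $\sigma$ is satisfiable (i.e. there exists $\rho\in\mathrm{Inst}(d)$ with $\rho\,\epsilon\,\sigma$), then $\vdash\mathrm{fold}(\sigma)(\Gamma)$ is derivable in LK1.
   Context: Formulas are first-order formulas in negation normal form, built from literals (atoms and negated atoms) using $\wedge,\vee,\forall,\exists$. Eigenvariables (written $\bar x$) and meta-variables (written $X$) are two disjoint infinite supplies of variables. Domains: there is an initial domain $d_0$ (declaring some eigenvariables and no meta-variable); for a domain $d$ and an eigenvariable $\bar x$ (resp. meta-variable $X$) not declared in $d$, $d;\bar x$ (resp. $d;X$) is a domain declaring additionally $\bar x$ (resp. $X$); all domains arise this way. A term (resp. formula) of domain $d$ is one whose (free) variables are all eigenvariables or meta-variables declared in $d$; it is ground if it contains no meta-variable; a context of domain $d$ is a finite multiset of formulas of domain $d$. $T_d$ is the set of ground terms of domain $d$. The set $\mathrm{Inst}(d)$ of instantiations of domain $d$ is defined by $\mathrm{Inst}(d_0)=\{\emptyset\}$, $\mathrm{Inst}(d;\bar x)=\mathrm{Inst}(d)$, $\mathrm{Inst}(d;X)=\{(X\mapsto t,\rho)\mid t\in T_d,\ \rho\in\mathrm{Inst}(d)\}$; for $\rho\in\mathrm{Inst}(d)$, $\rho(t),\rho(A),\rho(\Gamma)$ denote the result of replacing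 each meta-variable of $d$ by its image under $\rho$. For a context $\Gamma$, $\Gamma_{lit}$ is the set of literals that are elements of $\Gamma$. A ground validity predicate $\models$ is a predicate on sets of ground literals. System LK1 derives sequents $\vdash\Gamma$ ($\Gamma$ a set of formulas without meta-variables) by the rules: $\vdash\Gamma$ if $\models\Gamma_{lit}$; from $\vdash\Gamma,A$ and $\vdash\Gamma,B$ infer $\vdash\Gamma,A\wedge B$; from $\vdash\Gamma,A,B$ infer $\vdash\Gamma,A\vee B$; from $\vdash\Gamma,A[x:=t],\exists xA$ infer $\vdash\Gamma,\exists xA$ ($t$ any term without meta-variables); from $\vdash\Gamma,A[x:=\bar x]$ infer $\vdash\Gamma,\forall xA$ with $\bar x$ a fresh eigenvariable. A constraint structure consists of a set $\Psi_d$ (constraints of domain $d$) for each domain $d$, with $\Psi_{d;\bar x}=\Psi_d$, and projection maps $\Psi_{d;X}\to\Psi_d$, $\sigma\mapsto\sigma_\downarrow$. A meet constraint structure additionally has a binary operation $\wedge$ on each $\Psi_d$. A compatibility relation is a family of relations $\rho\,\epsilon\,\sigma$ between $\rho\in\mathrm{Inst}(d)$ and $\sigma\in\Psi_d$ satisfying (A_proj): for all $\sigma\in\Psi_{d;X}$, $t\in T_d$, $\rho\in\mathrm{Inst}(d)$, $(X\mapsto t,\rho)\,\epsilon\,\sigma$ implies $\rho\,\epsilon\,\sigma_\downarrow$. It distributes over $\wedge$ if (A_meet): for all $\sigma,\sigma'\in\Psi_d$, $\rho\in\mathrm{Inst}(d)$, ($\rho\,\epsilon\,\sigma$ and $\rho\,\epsilon\,\sigma'$)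 iff $\rho\,\epsilon\,(\sigma\wedge\sigma')$. A witness builder assigns to every $\sigma\in\Psi_{d;X}$ a function $\beta_\sigma:\mathrm{Inst}(d)\to T_d$ such that (A_witness): for all $\rho\in\mathrm{Inst}(d)$, $\rho\,\epsilon\,\sigma_\downarrow$ implies $(X\mapsto\beta_\sigma(\rho),\rho)\,\epsilon\,\sigma$. The fold of $\sigma\in\Psi_d$ is the instantiation $\mathrm{fold}(\sigma)\in\mathrm{Inst}(d)$ defined by induction on $d$: $\mathrm{fold}(\sigma)=\emptyset$ if $d=d_0$; for $d=d';\bar x$, $\mathrm{fold}(\sigma)$ is the fold of $\sigma$ viewed in $\Psi_{d'}$; and $\mathrm{fold}(\sigma)=(X\mapsto\beta_\sigma(\mathrm{fold}(\sigma_\downarrow)),\ \mathrm{fold}(\sigma_\downarrow))$ if $d=d';X$. A constraint-producing predicate is a family of relations $\mathcal A\models^d\sigma$ between sets $\mathcal A$ of literals of domain $d$ and $\sigma\in\Psi_d$. It relates to $\models$ if (A_pg): for every domain $d$ and set $\mathcal A$ of literals of domain $d$, $\{\rho\in\mathrm{Inst}(d)\mid\ \models\rho(\mathcal A)\}=\bigcup_{\sigma:\ \mathcal A\models^d\sigma}\{\rho\in\mathrm{Inst}(d)\mid\rho\,\epsilon\,\sigma\}$. System DI derives sequents $\vdash^d\Gamma\to\sigma$ ($\Gamma$ a context and $\sigma$ a constraint, both of domain $d$) by the rules: $\vdash^d\Gamma\to\sigma$ if $\Gamma_{lit}\models^d\sigma$; from $\vdash^d\Gamma,A\to\sigma$ and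 $\vdash^d\Gamma,B\to\sigma'$ infer $\vdash^d\Gamma,A\wedge B\to\sigma\wedge\sigma'$; from $\vdash^d\Gamma,A,B\to\sigma$ infer $\vdash^d\Gamma,A\vee B\to\sigma$; from $\vdash^{d;X}\Gamma,A[x:=X],\exists xA\to\sigma$ ($X$ a fresh meta-variable) infer $\vdash^d\Gamma,\exists xA\to\sigma_\downarrow$; from $\vdash^{d;\bar x}\Gamma,A[x:=\bar x]\to\sigma$ ($\bar x$ a fresh eigenvariable) infer $\vdash^d\Gamma,\forall xA\to\sigma$. *)

theory Defs
  imports Main "HOL-Library.Multiset"
begin

datatype var = Eig nat | Meta nat | Bnd nat

datatype 'f trm = Var var | Fn 'f "'f trm list"

text \<open>Formulas in negation normal form: a literal is an atom (polarity True)
  or a negated atom (polarity False).\<close>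
datatype ('p, 'f) fm =
    Lit bool 'p "'f trm list"
  | Conj "('p, 'f) fm" "('p, 'f) fm"
  | Disj "('p, 'f) fm" "('p, 'f) fm"
  | Forall nat "('p, 'f) fm"
  | Exists nat "('p, 'f) fm"

fun tvars :: "'f trm \<Rightarrow> var set" where
  "tvars (Var v) = {v}"
| "tvars (Fn f ts) = \<Union> (set (map tvars ts))"

fun fvars :: "('p, 'f) fm \<Rightarrow> var set" where
  "fvars (Lit b p ts) = \<Union> (set (map tvars ts))"
| "fvars (Conj A B) = fvars A \<union> fvars B"
| "fvars (Disj A B) = fvars A \<union> fvars B"
| "fvars (Forall x A) = fvars A - {Bnd x}"
| "fvars (Exists x A) = fvars A - {Bnd x}"

fun tsubst :: "(var \<Rightarrow> 'f trm) \<Rightarrow> 'f trm \<Rightarrow> 'f trm" where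
  "tsubst s (Var v) = s v"
| "tsubst s (Fn f ts) = Fn f (map (tsubst s) ts)"

text \<open>Substitution of free variables (only ever used with substituted terms containing
  no bound variables, so no capture can occur).\<close>
fun fsubst :: "(var \<Rightarrow> 'f trm) \<Rightarrow> ('p, 'f) fm \<Rightarrow> ('p, 'f) fm" where
  "fsubst s (Lit b p ts) = Lit b p (map (tsubst s) ts)"
| "fsubst s (Conj A B) = Conj (fsubst s A) (fsubst s B)"
| "fsubst s (Disj A B) = Disj (fsubst s A) (fsubst s B)"
| "fsubst s (Forall x A) = Forall x (fsubst (s(Bnd x := Var (Bnd x))) A)"
| "fsubst s (Exists x A) = Exists x (fsubst (s(Bnd x := Var (Bnd x))) A)"

definition subst1 :: "('p, 'f) fm \<Rightarrow> nat \<Rightarrow> 'f trm \<Rightarrow> ('p, 'f) fm" where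
  "subst1 A x t = fsubst (Var(Bnd x := t)) A"

fun is_lit :: "('p, 'f) fm \<Rightarrow> bool" where
  "is_lit (Lit b p ts) = True"
| "is_lit _ = False"

definition lits :: "('p, 'f) fm set \<Rightarrow> ('p, 'f) fm set" where
  "lits \<Gamma> = {A \<in> \<Gamma>. is_lit A}"

definition no_meta :: "var set \<Rightarrow> bool" where
  "no_meta V \<longleftrightarrow> (\<forall>X. Meta X \<notin> V)"

text \<open>A domain is the initial domain d0 (declaring the eigenvariables in the parameter set E0)
  extended by a list of declarations; the list is written with the most recent declaration
  first, so d;x corresponds to (DE x # d) and d;X to (DM X # d); d0 is [].\<close>
datatype decl = DE nat | DM nat

type_synonym domain = "decl list"

definition eigs_of :: "nat set \<Rightarrow> domain \<Rightarrow> nat set" where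
  "eigs_of E0 d = E0 \<union> {x. DE x \<in> set d}"

definition decl_vars :: "nat set \<Rightarrow> domain \<Rightarrow> var set" where
  "decl_vars E0 d = Eig ` eigs_of E0 d \<union> {Meta X | X. DM X \<in> set d}"

fun wf_dom :: "nat set \<Rightarrow> domain \<Rightarrow> bool" where
  "wf_dom E0 [] = True"
| "wf_dom E0 (DE x # d) = (wf_dom E0 d \<and> x \<notin> eigs_of E0 d)"
| "wf_dom E0 (DM X # d) = (wf_dom E0 d \<and> DM X \<notin> set d)"

definition fm_dom :: "nat set \<Rightarrow> domain \<Rightarrow> ('p, 'f) fm \<Rightarrow> bool" where
  "fm_dom E0 d A \<longleftrightarrow> fvars A \<subseteq> decl_vars E0 d"

definition ctx_dom :: "nat set \<Rightarrow> domain \<Rightarrow> ('p, 'f) fm multiset \<Rightarrow> bool" where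
  "ctx_dom E0 d \<Gamma> \<longleftrightarrow> (\<forall>A \<in># \<Gamma>. fm_dom E0 d A)"

definition gterms :: "nat set \<Rightarrow> domain \<Rightarrow> 'f trm set" where
  "gterms E0 d = {t. tvars t \<subseteq> Eig ` eigs_of E0 d}"

text \<open>Instantiations: (X \<mapsto> t, \<rho>) is represented as (X, t) # \<rho>.\<close>
type_synonym 'f inst = "(nat \<times> 'f trm) list"

fun Inst :: "nat set \<Rightarrow> domain \<Rightarrow> 'f inst set" where
  "Inst E0 [] = {[]}"
| "Inst E0 (DE x # d) = Inst E0 d"
| "Inst E0 (DM X # d) = {(X, t) # \<rho> | t \<rho>. t \<in> gterms E0 d \<and> \<rho> \<in> Inst E0 d}"

definition inst_map :: "'f inst \<Rightarrow> var \<Rightarrow> 'f trm" where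
  "inst_map \<rho> v = (case v of Meta X \<Rightarrow> (case map_of \<rho> X of Some t \<Rightarrow> t | None \<Rightarrow> Var v)
                            | _ \<Rightarrow> Var v)"

definition inst_fm :: "'f inst \<Rightarrow> ('p, 'f) fm \<Rightarrow> ('p, 'f) fm" where
  "inst_fm \<rho> A = fsubst (inst_map \<rho>) A"

inductive LK1 :: "(('p, 'f) fm set \<Rightarrow> bool) \<Rightarrow> ('p, 'f) fm set \<Rightarrow> bool"
  for valid :: "('p, 'f) fm set \<Rightarrow> bool" where
  LK1_ax: "(\<forall>A \<in> \<Gamma>. no_meta (fvars A)) \<Longrightarrow> valid (lits \<Gamma>) \<Longrightarrow> LK1 valid \<Gamma>"
| LK1_conj: "LK1 valid (insert A \<Gamma>) \<Longrightarrow> LK1 valid (insert B \<Gamma>) \<Longrightarrow> LK1 valid (insert (Conj A B) \<Gamma>)"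
| LK1_disj: "LK1 valid (insert A (insert B \<Gamma>)) \<Longrightarrow> LK1 valid (insert (Disj A B) \<Gamma>)"
| LK1_ex: "(\<forall>v \<in> tvars t. \<exists>y. v = Eig y) \<Longrightarrow>
           LK1 valid (insert (subst1 A x t) (insert (Exists x A) \<Gamma>)) \<Longrightarrow>
           LK1 valid (insert (Exists x A) \<Gamma>)"
| LK1_all: "Eig y \<notin> fvars (Forall x A) \<Longrightarrow> (\<forall>B \<in> \<Gamma>. Eig y \<notin> fvars B) \<Longrightarrow>
            LK1 valid (insert (subst1 A x (Var (Eig y))) \<Gamma>) \<Longrightarrow>
            LK1 valid (insert (Forall x A) \<Gamma>)"

text \<open>Parameters (all indexed by the domain): Psi d is the set \<Psi>_d of constraints;
  proj (DM X # d) is the projection \<Psi>_{d;X} \<rightarrow> \<Psi>_d; meet d is \<and> on \<Psi>_d;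
  eps d \<rho> \<sigma> is \<rho> \<epsilon> \<sigma>; beta (DM X # d) \<sigma> is \<beta>_\<sigma> for \<sigma> \<in> \<Psi>_{d;X};
  cp d \<A> \<sigma> is \<A> \<Turnstile>^d \<sigma>.\<close>

definition meet_constraint_structure ::
  "nat set \<Rightarrow> (domain \<Rightarrow> 'c set) \<Rightarrow> (domain \<Rightarrow> 'c \<Rightarrow> 'c) \<Rightarrow> (domain \<Rightarrow> 'c \<Rightarrow> 'c \<Rightarrow> 'c) \<Rightarrow> bool" where
  "meet_constraint_structure E0 Psi proj meet \<longleftrightarrow>
     (\<forall>d x. wf_dom E0 (DE x # d) \<longrightarrow> Psi (DE x # d) = Psi d) \<and>
     (\<forall>d X \<sigma>. wf_dom E0 (DM X # d) \<longrightarrow> \<sigma> \<in> Psi (DM X # d) \<longrightarrow> proj (DM X # d) \<sigma> \<in> Psi d) \<and>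
     (\<forall>d \<sigma> \<sigma>'. wf_dom E0 d \<longrightarrow> \<sigma> \<in> Psi d \<longrightarrow> \<sigma>' \<in> Psi d \<longrightarrow> meet d \<sigma> \<sigma>' \<in> Psi d)"

text \<open>Since \<Psi>_{d;x} = \<Psi>_d and Inst(d;x) = Inst(d), the compatibility relation of
  d;x is that of d.\<close>
definition compat_relation ::
  "nat set \<Rightarrow> (domain \<Rightarrow> 'c set) \<Rightarrow> (domain \<Rightarrow> 'c \<Rightarrow> 'c) \<Rightarrow> (domain \<Rightarrow> 'f inst \<Rightarrow> 'c \<Rightarrow> bool) \<Rightarrow> bool" where
  "compat_relation E0 Psi proj eps \<longleftrightarrow>
     (\<forall>d x \<rho> \<sigma>. wf_dom E0 (DE x # d) \<longrightarrow> \<rho> \<in> Inst E0 d \<longrightarrow> \<sigma> \<in> Psi d \<longrightarrow>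
        (eps (DE x # d) \<rho> \<sigma> \<longleftrightarrow> eps d \<rho> \<sigma>)) \<and>
     \<comment> \<open>(A_proj)\<close>
     (\<forall>d X \<sigma> t \<rho>. wf_dom E0 (DM X # d) \<longrightarrow> \<sigma> \<in> Psi (DM X # d) \<longrightarrow> t \<in> gterms E0 d \<longrightarrow>
        \<rho> \<in> Inst E0 d \<longrightarrow> eps (DM X # d) ((X, t) # \<rho>) \<sigma> \<longrightarrow> eps d \<rho> (proj (DM X # d) \<sigma>))"

text \<open>(A_meet)\<close>
definition distributes_over_meet ::
  "nat set \<Rightarrow> (domain \<Rightarrow> 'c set) \<Rightarrow> (domain \<Rightarrow> 'c \<Rightarrow> 'c \<Rightarrow> 'c) \<Rightarrow> (domain \<Rightarrow> 'f inst \<Rightarrow> 'c \<Rightarrow> bool) \<Rightarrow> bool" where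
  "distributes_over_meet E0 Psi meet eps \<longleftrightarrow>
     (\<forall>d \<sigma> \<sigma>' \<rho>. wf_dom E0 d \<longrightarrow> \<sigma> \<in> Psi d \<longrightarrow> \<sigma>' \<in> Psi d \<longrightarrow> \<rho> \<in> Inst E0 d \<longrightarrow>
        ((eps d \<rho> \<sigma> \<and> eps d \<rho> \<sigma>') \<longleftrightarrow> eps d \<rho> (meet d \<sigma> \<sigma>')))"

text \<open>Witness builder: \<beta>_\<sigma> : Inst(d) \<rightarrow> T_d satisfying (A_witness).\<close>
definition witness_builder ::
  "nat set \<Rightarrow> (domain \<Rightarrow> 'c set) \<Rightarrow> (domain \<Rightarrow> 'c \<Rightarrow> 'c) \<Rightarrow> (domain \<Rightarrow> 'f inst \<Rightarrow> 'c \<Rightarrow> bool)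
     \<Rightarrow> (domain \<Rightarrow> 'c \<Rightarrow> 'f inst \<Rightarrow> 'f trm) \<Rightarrow> bool" where
  "witness_builder E0 Psi proj eps beta \<longleftrightarrow>
     (\<forall>d X \<sigma> \<rho>. wf_dom E0 (DM X # d) \<longrightarrow> \<sigma> \<in> Psi (DM X # d) \<longrightarrow> \<rho> \<in> Inst E0 d \<longrightarrow>
        beta (DM X # d) \<sigma> \<rho> \<in> gterms E0 d \<and>
        (eps d \<rho> (proj (DM X # d) \<sigma>) \<longrightarrow> eps (DM X # d) ((X, beta (DM X # d) \<sigma> \<rho>) # \<rho>) \<sigma>))"

fun fold_c :: "(domain \<Rightarrow> 'c \<Rightarrow> 'c) \<Rightarrow> (domain \<Rightarrow> 'c \<Rightarrow> 'f inst \<Rightarrow> 'f trm) \<Rightarrow> domain \<Rightarrow> 'c \<Rightarrow> 'f inst" where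
  "fold_c proj beta [] \<sigma> = []"
| "fold_c proj beta (DE x # d) \<sigma> = fold_c proj beta d \<sigma>"
| "fold_c proj beta (DM X # d) \<sigma> =
     (let \<rho> = fold_c proj beta d (proj (DM X # d) \<sigma>) in (X, beta (DM X # d) \<sigma> \<rho>) # \<rho>)"

text \<open>(A_pg): the constraint-producing predicate relates to the ground validity predicate.\<close>
definition relates_to ::
  "nat set \<Rightarrow> (domain \<Rightarrow> 'c set) \<Rightarrow> (domain \<Rightarrow> 'f inst \<Rightarrow> 'c \<Rightarrow> bool)
     \<Rightarrow> (domain \<Rightarrow> ('p, 'f) fm set \<Rightarrow> 'c \<Rightarrow> bool) \<Rightarrow> (('p, 'f) fm set \<Rightarrow> bool) \<Rightarrow> bool" where
  "relates_to E0 Psi eps cp valid \<longleftrightarrow>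
     (\<forall>d \<A>. wf_dom E0 d \<longrightarrow> (\<forall>A \<in> \<A>. is_lit A \<and> fm_dom E0 d A) \<longrightarrow>
        {\<rho> \<in> Inst E0 d. valid (inst_fm \<rho> ` \<A>)}
          = (\<Union>\<sigma> \<in> {\<sigma> \<in> Psi d. cp d \<A> \<sigma>}. {\<rho> \<in> Inst E0 d. eps d \<rho> \<sigma>}))"

inductive DI :: "nat set \<Rightarrow> (domain \<Rightarrow> 'c set) \<Rightarrow> (domain \<Rightarrow> 'c \<Rightarrow> 'c) \<Rightarrow> (domain \<Rightarrow> 'c \<Rightarrow> 'c \<Rightarrow> 'c)
    \<Rightarrow> (domain \<Rightarrow> ('p, 'f) fm set \<Rightarrow> 'c \<Rightarrow> bool) \<Rightarrow> domain \<Rightarrow> ('p, 'f) fm multiset \<Rightarrow> 'c \<Rightarrow> bool"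
  for E0 Psi proj meet cp where
  DI_ax: "wf_dom E0 d \<Longrightarrow> ctx_dom E0 d \<Gamma> \<Longrightarrow> \<sigma> \<in> Psi d \<Longrightarrow> cp d (lits (set_mset \<Gamma>)) \<sigma> \<Longrightarrow>
          DI E0 Psi proj meet cp d \<Gamma> \<sigma>"
| DI_conj: "DI E0 Psi proj meet cp d (\<Gamma> + {#A#}) \<sigma> \<Longrightarrow> DI E0 Psi proj meet cp d (\<Gamma> + {#B#}) \<sigma>' \<Longrightarrow>
            DI E0 Psi proj meet cp d (\<Gamma> + {#Conj A B#}) (meet d \<sigma> \<sigma>')"
| DI_disj: "DI E0 Psi proj meet cp d (\<Gamma> + {#A, B#}) \<sigma> \<Longrightarrow>
            DI E0 Psi proj meet cp d (\<Gamma> + {#Disj A B#}) \<sigma>"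
| DI_ex: "wf_dom E0 (DM X # d) \<Longrightarrow> ctx_dom E0 d (\<Gamma> + {#Exists x A#}) \<Longrightarrow>
          DI E0 Psi proj meet cp (DM X # d) (\<Gamma> + {#subst1 A x (Var (Meta X)), Exists x A#}) \<sigma> \<Longrightarrow>
          DI E0 Psi proj meet cp d (\<Gamma> + {#Exists x A#}) (proj (DM X # d) \<sigma>)"
| DI_all: "wf_dom E0 (DE y # d) \<Longrightarrow> ctx_dom E0 d (\<Gamma> + {#Forall x A#}) \<Longrightarrow>
           DI E0 Psi proj meet cp (DE y # d) (\<Gamma> + {#subst1 A x (Var (Eig y))#}) \<sigma> \<Longrightarrow>
           DI E0 Psi proj meet cp d (\<Gamma> + {#Forall x A#}) \<sigma>"

end

theory Submission
  imports Defs
begin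

text \<open>Every DI derivation of \<open>\<turnstile>\<^sup>d \<Gamma> \<rightarrow> \<sigma>\<close> is turned into an LK1 derivation of \<open>\<rho>(\<Gamma>)\<close>
  simultaneously for all instantiations \<open>\<rho>\<close> compatible with \<open>\<sigma>\<close>, by induction on the derivation.
  At an axiom, (A_pg) says that \<open>\<rho>(lits \<Gamma>)\<close> is valid; a conjunction splits the
  compatibility with \<open>\<sigma> \<and> \<sigma>'\<close> by (A_meet); at an \<open>\<exists>\<close>-step the witness builder extends \<open>\<rho>\<close>
  by a value for the fresh meta-variable \<open>X\<close> that is compatible with the premise's constraint,
  and this value is the LK1 witness; at a \<open>\<forall>\<close>-step the eigenvariable stays fresh for \<open>\<rho>(\<Gamma>)\<close>
  because \<open>\<rho>\<close> is ground.  Finally, if \<open>\<sigma>\<close> is satisfiable then \<open>fold(\<sigma>)\<close> is compatible with \<open>\<sigma>\<close>,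
  by (A_proj) and (A_witness) along the domain.\<close>

lemma tsubst_cong: "(\<And>v. v \<in> tvars t \<Longrightarrow> s v = s' v) \<Longrightarrow> tsubst s t = tsubst s' t"
  by (induction t) auto

lemma tsubst_id: "(\<And>v. v \<in> tvars t \<Longrightarrow> s v = Var v) \<Longrightarrow> tsubst s t = t"
  by (induction t) (auto intro: map_idI)

lemma tvars_tsubst: "tvars (tsubst s t) = (\<Union>v\<in>tvars t. tvars (s v))"
  by (induction t) auto

lemma tsubst_tsubst: "tsubst s (tsubst s' t) = tsubst (\<lambda>v. tsubst s (s' v)) t"
  by (induction t) auto

lemma fsubst_cong: "(\<And>v. v \<in> fvars A \<Longrightarrow> s v = s' v) \<Longrightarrow> fsubst s A = fsubst s' A"
proof (induction A arbitrary: s s')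
  case (Lit b p ts)
  then show ?case by (auto intro: tsubst_cong)
next
  case (Conj A B)
  have "fsubst s A = fsubst s' A" "fsubst s B = fsubst s' B"
    by (rule Conj.IH; simp add: Conj.prems)+
  then show ?case by simp
next
  case (Disj A B)
  have "fsubst s A = fsubst s' A" "fsubst s B = fsubst s' B"
    by (rule Disj.IH; simp add: Disj.prems)+
  then show ?case by simp
next
  case (Forall x A)
  have "fsubst (s(Bnd x := Var (Bnd x))) A = fsubst (s'(Bnd x := Var (Bnd x))) A"
    by (rule Forall.IH) (use Forall.prems in auto)
  then show ?case by simp
next
  case (Exists x A)
  have "fsubst (s(Bnd x := Var (Bnd x))) A = fsubst (s'(Bnd x := Var (Bnd x))) A"
    by (rule Exists.IH) (use Exists.prems in auto)
  then show ?case by simp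
qed

lemma fvars_fsubst_bind:
  assumes "fvars (fsubst (s(Bnd x := Var (Bnd x))) A) \<subseteq> (\<Union>v\<in>fvars A. tvars ((s(Bnd x := Var (Bnd x))) v))"
  shows "fvars (fsubst (s(Bnd x := Var (Bnd x))) A) - {Bnd x} \<subseteq> (\<Union>v\<in>fvars A - {Bnd x}. tvars (s v))"
proof
  fix w assume w: "w \<in> fvars (fsubst (s(Bnd x := Var (Bnd x))) A) - {Bnd x}"
  with assms obtain v where "v \<in> fvars A" "w \<in> tvars ((s(Bnd x := Var (Bnd x))) v)" by blast
  with w show "w \<in> (\<Union>v\<in>fvars A - {Bnd x}. tvars (s v))" by (cases "v = Bnd x") auto
qed

lemma fvars_fsubst: "fvars (fsubst s A) \<subseteq> (\<Union>v\<in>fvars A. tvars (s v))"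
proof (induction A arbitrary: s)
  case (Lit b p ts)
  then show ?case by (auto simp: tvars_tsubst)
next
  case (Conj A B)
  then show ?case by (metis UN_Un Un_mono fsubst.simps(2) fvars.simps(2))
next
  case (Disj A B)
  then show ?case by (metis UN_Un Un_mono fsubst.simps(3) fvars.simps(3))
next
  case (Forall x A)
  show ?case using fvars_fsubst_bind[OF Forall.IH] by simp
next
  case (Exists x A)
  show ?case using fvars_fsubst_bind[OF Exists.IH] by simp
qed

text \<open>\<^const>\<open>fsubst\<close> does not rename binders; composing two substitutions is correct
  as long as the inner one never introduces a bound variable, except by leaving a variable fixed.\<close>
definition capture_free :: "(var \<Rightarrow> 'f trm) \<Rightarrow> bool" where
  "capture_free s \<longleftrightarrow> (\<forall>v. s v = Var v \<or> (\<forall>b. Bnd b \<notin> tvars (s v)))"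

lemma capture_free_bind:
  assumes "capture_free s'"
  shows "capture_free (s'(Bnd x := Var (Bnd x)))"
    and "(\<lambda>v. tsubst (s(Bnd x := Var (Bnd x))) ((s'(Bnd x := Var (Bnd x))) v))
       = (\<lambda>v. tsubst s (s' v))(Bnd x := Var (Bnd x))"
proof -
  show "capture_free (s'(Bnd x := Var (Bnd x)))"
    using assms unfolding capture_free_def by auto
  have "tsubst (s(Bnd x := Var (Bnd x))) (s' v) = tsubst s (s' v)" if "v \<noteq> Bnd x" for v
    using assms that unfolding capture_free_def by (metis fun_upd_other tsubst.simps(1) tsubst_cong)
  then show "(\<lambda>v. tsubst (s(Bnd x := Var (Bnd x))) ((s'(Bnd x := Var (Bnd x))) v))
       = (\<lambda>v. tsubst s (s' v))(Bnd x := Var (Bnd x))"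
    by auto
qed

lemma fsubst_fsubst:
  "capture_free s' \<Longrightarrow> fsubst s (fsubst s' A) = fsubst (\<lambda>v. tsubst s (s' v)) A"
  by (induction A arbitrary: s s') (simp_all add: tsubst_tsubst capture_free_bind del: fun_upd_apply)

definition ground_inst :: "'f inst \<Rightarrow> bool" where
  "ground_inst \<rho> \<longleftrightarrow> (\<forall>(Y, u) \<in> set \<rho>. tvars u \<subseteq> range Eig)"

lemma inst_map_Bnd [simp]: "inst_map \<rho> (Bnd b) = Var (Bnd b)"
  and inst_map_Eig [simp]: "inst_map \<rho> (Eig e) = Var (Eig e)"
  and inst_map_Cons_Meta [simp]: "inst_map ((X, t) # \<rho>) (Meta X) = t"
  by (simp_all add: inst_map_def)

lemma inst_map_ground:
  "ground_inst \<rho> \<Longrightarrow> inst_map \<rho> v = Var v \<or> tvars (inst_map \<rho> v) \<subseteq> range Eig"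
  unfolding ground_inst_def inst_map_def
  by (auto split: var.splits option.splits dest!: map_of_SomeD)

lemma capture_free_inst_map: "ground_inst \<rho> \<Longrightarrow> capture_free (inst_map \<rho>)"
  unfolding capture_free_def by (metis image_iff inst_map_ground subsetD var.distinct(3))

lemma inst_fm_Conj [simp]: "inst_fm \<rho> (Conj A B) = Conj (inst_fm \<rho> A) (inst_fm \<rho> B)"
  and inst_fm_Disj [simp]: "inst_fm \<rho> (Disj A B) = Disj (inst_fm \<rho> A) (inst_fm \<rho> B)"
  and inst_fm_Forall [simp]: "inst_fm \<rho> (Forall x A) = Forall x (inst_fm \<rho> A)"
  and inst_fm_Exists [simp]: "inst_fm \<rho> (Exists x A) = Exists x (inst_fm \<rho> A)"
  by (simp_all add: inst_fm_def fun_upd_idem)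

lemma is_lit_inst_fm [simp]: "is_lit (inst_fm \<rho> A) = is_lit A"
  by (cases A) (simp_all add: inst_fm_def)

lemma lits_image_inst_fm: "lits (inst_fm \<rho> ` \<Gamma>) = inst_fm \<rho> ` lits \<Gamma>"
  unfolding lits_def by auto

lemma inst_fm_subst1:
  assumes "ground_inst \<rho>" and "\<forall>b. Bnd b \<notin> tvars t"
  shows "inst_fm \<rho> (subst1 A x t) = subst1 (inst_fm \<rho> A) x (tsubst (inst_map \<rho>) t)"
proof -
  let ?t' = "tsubst (inst_map \<rho>) t"
  have "tsubst (Var(Bnd x := ?t')) (inst_map \<rho> v) = inst_map \<rho> v" if "v \<noteq> Bnd x" for v
    using inst_map_ground[OF assms(1), of v] that by (force intro!: tsubst_id)
  then have "(\<lambda>v. tsubst (inst_map \<rho>) ((Var(Bnd x := t)) v))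
           = (\<lambda>v. tsubst (Var(Bnd x := ?t')) (inst_map \<rho> v))"
    by (auto simp: fun_eq_iff)
  moreover have "capture_free (Var(Bnd x := t))"
    using assms(2) unfolding capture_free_def by simp
  ultimately show ?thesis
    unfolding inst_fm_def subst1_def
    by (simp add: fsubst_fsubst capture_free_inst_map[OF assms(1)])
qed

lemma inst_fm_Cons_fresh: "Meta X \<notin> fvars B \<Longrightarrow> inst_fm ((X, t) # \<rho>) B = inst_fm \<rho> B"
  unfolding inst_fm_def by (rule fsubst_cong) (auto simp: inst_map_def split: var.splits)

lemma Inst_tvars: "\<rho> \<in> Inst E0 d \<Longrightarrow> (Y, u) \<in> set \<rho> \<Longrightarrow> tvars u \<subseteq> Eig ` eigs_of E0 d"
proof (induction d arbitrary: \<rho>)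
  case (Cons a d)
  have "eigs_of E0 d \<subseteq> eigs_of E0 (a # d)" by (auto simp: eigs_of_def)
  with Cons show ?case by (cases a) (fastforce simp: gterms_def)+
qed simp

lemma Inst_map_of: "\<rho> \<in> Inst E0 d \<Longrightarrow> DM X \<in> set d \<Longrightarrow> map_of \<rho> X \<noteq> None"
proof (induction d arbitrary: \<rho>)
  case (Cons a d)
  then show ?case by (cases a) auto
qed simp

lemma Inst_ground: "\<rho> \<in> Inst E0 d \<Longrightarrow> ground_inst \<rho>"
  unfolding ground_inst_def using Inst_tvars by fast

lemma tvars_inst_map:
  assumes "\<rho> \<in> Inst E0 d" and "v \<in> decl_vars E0 d"
  shows "tvars (inst_map \<rho> v) \<subseteq> Eig ` eigs_of E0 d"
proof (cases v)
  case (Meta X)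
  then have "DM X \<in> set d" using assms(2) by (auto simp: decl_vars_def)
  then obtain u where "map_of \<rho> X = Some u" using Inst_map_of[OF assms(1)] by blast
  then show ?thesis
    using Meta Inst_tvars[OF assms(1) map_of_SomeD] by (simp add: inst_map_def)
qed (use assms(2) in \<open>auto simp: decl_vars_def\<close>)

lemma fvars_inst_fm:
  assumes "\<rho> \<in> Inst E0 d" and "fm_dom E0 d B"
  shows "fvars (inst_fm \<rho> B) \<subseteq> Eig ` eigs_of E0 d"
  using fvars_fsubst[of "inst_map \<rho>" B] tvars_inst_map[OF assms(1)] assms(2)
  unfolding inst_fm_def fm_dom_def by blast

lemma fvars_image_inst_fm:
  assumes "\<rho> \<in> Inst E0 d" and "ctx_dom E0 d \<Gamma>" and "A \<in> inst_fm \<rho> ` set_mset \<Gamma>"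
  shows "fvars A \<subseteq> Eig ` eigs_of E0 d"
  using assms fvars_inst_fm unfolding ctx_dom_def by blast

lemma Meta_notin_fvars_ctx:
  "ctx_dom E0 d \<Gamma> \<Longrightarrow> DM X \<notin> set d \<Longrightarrow> B \<in># \<Gamma> \<Longrightarrow> Meta X \<notin> fvars B"
  unfolding ctx_dom_def fm_dom_def decl_vars_def by blast

lemma image_inst_fm_Exists_premise:
  assumes "ground_inst \<rho>" and "tvars t \<subseteq> range Eig"
    and fresh: "\<forall>B \<in># \<Gamma> + {#Exists x A#}. Meta X \<notin> fvars B"
  shows "inst_fm ((X, t) # \<rho>) ` set_mset (\<Gamma> + {#subst1 A x (Var (Meta X)), Exists x A#})
       = insert (subst1 (inst_fm \<rho> A) x t) (insert (Exists x (inst_fm \<rho> A)) (inst_fm \<rho> ` set_mset \<Gamma>))"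
proof -
  have "ground_inst ((X, t) # \<rho>)" using assms(1,2) unfolding ground_inst_def by simp
  then have "inst_fm ((X, t) # \<rho>) (subst1 A x (Var (Meta X))) = subst1 (inst_fm \<rho> A) x t"
    using inst_fm_subst1[of "(X, t) # \<rho>" "Var (Meta X)" A x] fresh
    by (simp add: inst_fm_Cons_fresh)
  moreover have "inst_fm ((X, t) # \<rho>) ` set_mset (\<Gamma> + {#Exists x A#})
      = inst_fm \<rho> ` set_mset (\<Gamma> + {#Exists x A#})"
    by (intro image_cong refl inst_fm_Cons_fresh) (use fresh in auto)
  ultimately show ?thesis by simp
qed

lemma image_inst_fm_Forall_premise:
  "ground_inst \<rho> \<Longrightarrow> inst_fm \<rho> ` set_mset (\<Gamma> + {#subst1 A x (Var (Eig y))#})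
     = insert (subst1 (inst_fm \<rho> A) x (Var (Eig y))) (inst_fm \<rho> ` set_mset \<Gamma>)"
  using inst_fm_subst1[of \<rho> "Var (Eig y)" A x] by simp

locale DI_semantics =
  fixes E0 :: "nat set"
    and Psi :: "domain \<Rightarrow> 'c set"
    and proj :: "domain \<Rightarrow> 'c \<Rightarrow> 'c"
    and meet :: "domain \<Rightarrow> 'c \<Rightarrow> 'c \<Rightarrow> 'c"
    and eps :: "domain \<Rightarrow> 'f inst \<Rightarrow> 'c \<Rightarrow> bool"
    and beta :: "domain \<Rightarrow> 'c \<Rightarrow> 'f inst \<Rightarrow> 'f trm"
    and cp :: "domain \<Rightarrow> ('p, 'f) fm set \<Rightarrow> 'c \<Rightarrow> bool"
    and valid :: "('p, 'f) fm set \<Rightarrow> bool"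
  assumes meet_structure: "meet_constraint_structure E0 Psi proj meet"
    and compat: "compat_relation E0 Psi proj eps"
    and distrib: "distributes_over_meet E0 Psi meet eps"
    and witness: "witness_builder E0 Psi proj eps beta"
    and relates: "relates_to E0 Psi eps cp valid"
begin

lemma Psi_DE: "wf_dom E0 (DE x # d) \<Longrightarrow> Psi (DE x # d) = Psi d"
  using meet_structure unfolding meet_constraint_structure_def by blast

lemma proj_in_Psi: "wf_dom E0 (DM X # d) \<Longrightarrow> \<sigma> \<in> Psi (DM X # d) \<Longrightarrow> proj (DM X # d) \<sigma> \<in> Psi d"
  using meet_structure unfolding meet_constraint_structure_def by blast

lemma meet_in_Psi: "wf_dom E0 d \<Longrightarrow> \<sigma> \<in> Psi d \<Longrightarrow> \<sigma>' \<in> Psi d \<Longrightarrow> meet d \<sigma> \<sigma>' \<in> Psi d"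
  using meet_structure unfolding meet_constraint_structure_def by blast

lemma eps_DE_iff:
  "wf_dom E0 (DE x # d) \<Longrightarrow> \<rho> \<in> Inst E0 d \<Longrightarrow> \<sigma> \<in> Psi d \<Longrightarrow> eps (DE x # d) \<rho> \<sigma> \<longleftrightarrow> eps d \<rho> \<sigma>"
  using compat unfolding compat_relation_def by blast

lemma eps_proj:
  "wf_dom E0 (DM X # d) \<Longrightarrow> \<sigma> \<in> Psi (DM X # d) \<Longrightarrow> t \<in> gterms E0 d \<Longrightarrow> \<rho> \<in> Inst E0 d \<Longrightarrow>
   eps (DM X # d) ((X, t) # \<rho>) \<sigma> \<Longrightarrow> eps d \<rho> (proj (DM X # d) \<sigma>)"
  using compat unfolding compat_relation_def by blast

lemma eps_meetD:
  "wf_dom E0 d \<Longrightarrow> \<sigma> \<in> Psi d \<Longrightarrow> \<sigma>' \<in> Psi d \<Longrightarrow> \<rho> \<in> Inst E0 d \<Longrightarrow>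
   eps d \<rho> (meet d \<sigma> \<sigma>') \<Longrightarrow> eps d \<rho> \<sigma> \<and> eps d \<rho> \<sigma>'"
  using distrib unfolding distributes_over_meet_def by blast

lemma beta_in_gterms:
  "wf_dom E0 (DM X # d) \<Longrightarrow> \<sigma> \<in> Psi (DM X # d) \<Longrightarrow> \<rho> \<in> Inst E0 d \<Longrightarrow> beta (DM X # d) \<sigma> \<rho> \<in> gterms E0 d"
  using witness unfolding witness_builder_def by blast

lemma eps_beta:
  "wf_dom E0 (DM X # d) \<Longrightarrow> \<sigma> \<in> Psi (DM X # d) \<Longrightarrow> \<rho> \<in> Inst E0 d \<Longrightarrow>
   eps d \<rho> (proj (DM X # d) \<sigma>) \<Longrightarrow> eps (DM X # d) ((X, beta (DM X # d) \<sigma> \<rho>) # \<rho>) \<sigma>"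
  using witness unfolding witness_builder_def by blast

lemma valid_if_eps_cp:
  assumes "wf_dom E0 d" and "\<forall>A \<in> \<A>. is_lit A \<and> fm_dom E0 d A"
    and "\<sigma> \<in> Psi d" and "cp d \<A> \<sigma>" and "\<rho> \<in> Inst E0 d" and "eps d \<rho> \<sigma>"
  shows "valid (inst_fm \<rho> ` \<A>)"
  using relates assms unfolding relates_to_def by blast

lemma DI_wf: "DI E0 Psi proj meet cp d \<Gamma> \<sigma> \<Longrightarrow> wf_dom E0 d \<and> \<sigma> \<in> Psi d \<and> ctx_dom E0 d \<Gamma>"
  by (induction rule: DI.induct)
    (auto simp: ctx_dom_def fm_dom_def meet_in_Psi proj_in_Psi Psi_DE)

lemma fold_c_compat:
  "wf_dom E0 d \<Longrightarrow> \<sigma> \<in> Psi d \<Longrightarrow> \<rho> \<in> Inst E0 d \<Longrightarrow> eps d \<rho> \<sigma> \<Longrightarrow>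
   fold_c proj beta d \<sigma> \<in> Inst E0 d \<and> eps d (fold_c proj beta d \<sigma>) \<sigma>"
proof (induction d arbitrary: \<sigma> \<rho>)
  case (Cons a d)
  show ?case
  proof (cases a)
    case (DE x)
    with Cons.prems have wf: "wf_dom E0 (DE x # d)" and \<sigma>: "\<sigma> \<in> Psi d"
      and \<rho>: "\<rho> \<in> Inst E0 d" and "eps d \<rho> \<sigma>"
      using Psi_DE eps_DE_iff by auto
    then show ?thesis using Cons.IH DE eps_DE_iff[OF wf _ \<sigma>] by auto
  next
    case (DM X)
    with Cons.prems obtain t \<rho>' where \<rho>: "\<rho> = (X, t) # \<rho>'" "t \<in> gterms E0 d" "\<rho>' \<in> Inst E0 d"
      by auto
    from Cons.prems DM have wf: "wf_dom E0 (DM X # d)" and \<sigma>: "\<sigma> \<in> Psi (DM X # d)"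
      by auto
    have "eps d \<rho>' (proj (DM X # d) \<sigma>)"
      using eps_proj[OF wf \<sigma> \<rho>(2,3)] Cons.prems(4) DM \<rho>(1) by simp
    then have "fold_c proj beta d (proj (DM X # d) \<sigma>) \<in> Inst E0 d \<and>
               eps d (fold_c proj beta d (proj (DM X # d) \<sigma>)) (proj (DM X # d) \<sigma>)"
      using Cons.IH wf proj_in_Psi[OF wf \<sigma>] \<rho>(3) by simp
    then show ?thesis
      using DM beta_in_gterms[OF wf \<sigma>] eps_beta[OF wf \<sigma>] by (auto simp: Let_def)
  qed
qed simp

lemma DI_sound:
  "DI E0 Psi proj meet cp d \<Gamma> \<sigma> \<Longrightarrow> \<rho> \<in> Inst E0 d \<Longrightarrow> eps d \<rho> \<sigma> \<Longrightarrow>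
   LK1 valid (inst_fm \<rho> ` set_mset \<Gamma>)"
proof (induction arbitrary: \<rho> rule: DI.induct)
  case (DI_ax d \<Gamma> \<sigma>)
  have "valid (inst_fm \<rho> ` lits (set_mset \<Gamma>))"
    using DI_ax valid_if_eps_cp unfolding lits_def ctx_dom_def by simp
  moreover have "no_meta (fvars A)" if "A \<in> inst_fm \<rho> ` set_mset \<Gamma>" for A
    using fvars_image_inst_fm[OF DI_ax.prems(1) DI_ax.hyps(2) that] unfolding no_meta_def by blast
  ultimately show ?case by (auto intro: LK1_ax simp: lits_image_inst_fm)
next
  case (DI_conj d \<Gamma> A \<sigma> B \<sigma>')
  from DI_wf[OF DI_conj.hyps(1)] DI_wf[OF DI_conj.hyps(2)]
  have "eps d \<rho> \<sigma> \<and> eps d \<rho> \<sigma>'"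
    using eps_meetD DI_conj.prems by blast
  then show ?case using DI_conj.IH DI_conj.prems(1) by (simp add: LK1_conj)
next
  case (DI_disj d \<Gamma> A B \<sigma>)
  then show ?case by (simp add: LK1_disj insert_commute)
next
  case (DI_ex X d \<Gamma> x A \<sigma>)
  define t where "t = beta (DM X # d) \<sigma> \<rho>"
  have \<sigma>: "\<sigma> \<in> Psi (DM X # d)" using DI_wf[OF DI_ex.hyps(3)] by simp
  have t: "t \<in> gterms E0 d" and eps_t: "eps (DM X # d) ((X, t) # \<rho>) \<sigma>"
    unfolding t_def using beta_in_gterms eps_beta DI_ex.hyps(1) \<sigma> DI_ex.prems by blast+
  have t_ground: "tvars t \<subseteq> range Eig" using t unfolding gterms_def by blast
  have fresh: "\<forall>B \<in># \<Gamma> + {#Exists x A#}. Meta X \<notin> fvars B"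
    using Meta_notin_fvars_ctx[OF DI_ex.hyps(2)] DI_ex.hyps(1) by simp
  have "LK1 valid (inst_fm ((X, t) # \<rho>) ` set_mset (\<Gamma> + {#subst1 A x (Var (Meta X)), Exists x A#}))"
    using DI_ex.IH DI_ex.prems(1) t eps_t by simp
  then have "LK1 valid (insert (subst1 (inst_fm \<rho> A) x t)
                (insert (Exists x (inst_fm \<rho> A)) (inst_fm \<rho> ` set_mset \<Gamma>)))"
    unfolding image_inst_fm_Exists_premise[OF Inst_ground[OF DI_ex.prems(1)] t_ground fresh] .
  with t_ground show ?case by (auto intro: LK1_ex)
next
  case (DI_all y d \<Gamma> x A \<sigma>)
  have "\<sigma> \<in> Psi d" using DI_wf[OF DI_all.hyps(3)] Psi_DE[OF DI_all.hyps(1)] by simp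
  then have "eps (DE y # d) \<rho> \<sigma>" using eps_DE_iff[OF DI_all.hyps(1)] DI_all.prems by simp
  then have "LK1 valid (inst_fm \<rho> ` set_mset (\<Gamma> + {#subst1 A x (Var (Eig y))#}))"
    using DI_all.IH DI_all.prems(1) by simp
  then have premise: "LK1 valid (insert (subst1 (inst_fm \<rho> A) x (Var (Eig y))) (inst_fm \<rho> ` set_mset \<Gamma>))"
    unfolding image_inst_fm_Forall_premise[OF Inst_ground[OF DI_all.prems(1)]] .
  have fresh: "Eig y \<notin> fvars B" if "B \<in> inst_fm \<rho> ` set_mset (\<Gamma> + {#Forall x A#})" for B
    using fvars_image_inst_fm[OF DI_all.prems(1) DI_all.hyps(2) that] DI_all.hyps(1) by auto
  have "Eig y \<notin> fvars (Forall x (inst_fm \<rho> A))" using fresh[of "Forall x (inst_fm \<rho> A)"] by simp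
  moreover have "\<forall>B \<in> inst_fm \<rho> ` set_mset \<Gamma>. Eig y \<notin> fvars B" using fresh by simp
  ultimately show ?case using LK1_all[OF _ _ premise] by simp
qed

end

theorem mainTheorem4:
  fixes E0 :: "nat set"
    and Psi :: "domain \<Rightarrow> 'c set"
    and proj :: "domain \<Rightarrow> 'c \<Rightarrow> 'c"
    and meet :: "domain \<Rightarrow> 'c \<Rightarrow> 'c \<Rightarrow> 'c"
    and eps :: "domain \<Rightarrow> 'f inst \<Rightarrow> 'c \<Rightarrow> bool"
    and beta :: "domain \<Rightarrow> 'c \<Rightarrow> 'f inst \<Rightarrow> 'f trm"
    and cp :: "domain \<Rightarrow> ('p, 'f) fm set \<Rightarrow> 'c \<Rightarrow> bool"
    and valid :: "('p, 'f) fm set \<Rightarrow> bool"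
    and d :: domain
    and \<Gamma> :: "('p, 'f) fm multiset"
    and \<sigma> :: 'c
  assumes "meet_constraint_structure E0 Psi proj meet"
    and "compat_relation E0 Psi proj eps"
    and "distributes_over_meet E0 Psi meet eps"
    and "witness_builder E0 Psi proj eps beta"
    and "relates_to E0 Psi eps cp valid"
    and "wf_dom E0 d"
    and "DI E0 Psi proj meet cp d \<Gamma> \<sigma>"
    and "\<exists>\<rho> \<in> Inst E0 d. eps d \<rho> \<sigma>"
  shows "LK1 valid (inst_fm (fold_c proj beta d \<sigma>) ` set_mset \<Gamma>)"
proof -
  interpret DI_semantics E0 Psi proj meet eps beta cp valid
    using assms(1-5) by unfold_locales
  from assms(8) obtain \<rho> where "\<rho> \<in> Inst E0 d" and "eps d \<rho> \<sigma>" by blast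
  then have "fold_c proj beta d \<sigma> \<in> Inst E0 d \<and> eps d (fold_c proj beta d \<sigma>) \<sigma>"
    using fold_c_compat assms(6) DI_wf[OF assms(7)] by blast
  then show ?thesis using DI_sound[OF assms(7)] by blast
qed

end
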